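(* Let $X$ be a nonempty set, $\circ:X\times X\to X$ a binary operation, and $p,q>0$ constants. Let \[ S:=\Big\{\tfrac{a}{a+b}\ \Big|\ a,b>0 \text{ and there is an operation } *:X\times X\to X \text{ such that every } (\circ,p,q)\text{-convex function is } ( *,a,b)\text{-convex}\Big\}. \] Then $1-S\subseteq S$ (where $1-S=\{1-s\mid s\in S\}$), and $S$ is a dense multiplicative subsemigroup of $[0,1]$ (i.e., $S\subseteq[0,1]$, $st\in S$ whenever $s,t\in S$, and $S$ is dense in $[0,1]$).
   Context: Given a nonempty set $X$, a binary operation $\star:X\times X\to X$ and constants $a,b>0$, a function $f:X\to\mathbb{R}$ is called $(\star,a,b)$-convex if $f(x\star y)\leq a f(x)+b f(y)$ for all $x,y\in X$. *)

theory Defs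
  imports "HOL-Analysis.Analysis"
begin

definition op_convex :: "('a \<Rightarrow> 'a \<Rightarrow> 'a) \<Rightarrow> real \<Rightarrow> real \<Rightarrow> ('a \<Rightarrow> real) \<Rightarrow> bool" where
  "op_convex star a b f \<longleftrightarrow> (\<forall>x y. f (star x y) \<le> a * f x + b * f y)"

end

theory Submission
  imports Defs
begin

text \<open>Reversing the arguments of an operation swaps the two constants, so S is closed under
  s \<mapsto> 1 - s. Nesting two operations as x, y \<mapsto> (x \<star>' y) \<star> (y \<star>' y) multiplies the ratios, so S is
  a multiplicative semigroup. Density follows: with u \<in> S small and v = 1 - u \<in> S, consecutive
  powers of v differ by at most u, so they form a u-net of [0, 1].\<close>

definition op_convex_transfer :: "('a \<Rightarrow> 'a \<Rightarrow> 'a) \<Rightarrow> real \<Rightarrow> real \<Rightarrow> real \<Rightarrow> real \<Rightarrow> bool" where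
  "op_convex_transfer circ p q a b \<longleftrightarrow>
     (\<exists>star. \<forall>f. op_convex circ p q f \<longrightarrow> op_convex star a b f)"

lemma op_convex_transfer_refl: "op_convex_transfer circ p q p q"
  unfolding op_convex_transfer_def by blast

lemma op_convex_swap:
  assumes "op_convex star a b f"
  shows "op_convex (\<lambda>x y. star y x) b a f"
  using assms unfolding op_convex_def by (metis add.commute)

lemma op_convex_transfer_swap:
  assumes "op_convex_transfer circ p q a b"
  shows "op_convex_transfer circ p q b a"
  using assms op_convex_swap unfolding op_convex_transfer_def by blast

lemma op_convex_nest:
  assumes f1: "op_convex star1 a b f" and f2: "op_convex star2 c d f"
    and "0 \<le> a" "0 \<le> b"
  shows "op_convex (\<lambda>x y. star1 (star2 x y) (star2 y y)) (a * c) (a * d + b * (c + d)) f"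
  unfolding op_convex_def
proof (intro allI)
  fix x y
  have "f (star1 (star2 x y) (star2 y y)) \<le> a * f (star2 x y) + b * f (star2 y y)"
    using f1 unfolding op_convex_def by blast
  also have "\<dots> \<le> a * (c * f x + d * f y) + b * (c * f y + d * f y)"
    using f2 \<open>0 \<le> a\<close> \<open>0 \<le> b\<close> unfolding op_convex_def
    by (intro add_mono mult_left_mono) auto
  also have "\<dots> = a * c * f x + (a * d + b * (c + d)) * f y"
    by (simp add: algebra_simps)
  finally show "f (star1 (star2 x y) (star2 y y)) \<le> a * c * f x + (a * d + b * (c + d)) * f y" .
qed

lemma op_convex_transfer_nest:
  assumes "op_convex_transfer circ p q a b" "op_convex_transfer circ p q c d"
    and "0 \<le> a" "0 \<le> b"
  shows "op_convex_transfer circ p q (a * c) (a * d + b * (c + d))"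
proof -
  obtain star1 where "\<forall>f. op_convex circ p q f \<longrightarrow> op_convex star1 a b f"
    using assms(1) unfolding op_convex_transfer_def by blast
  moreover obtain star2 where "\<forall>f. op_convex circ p q f \<longrightarrow> op_convex star2 c d f"
    using assms(2) unfolding op_convex_transfer_def by blast
  ultimately show ?thesis
    unfolding op_convex_transfer_def using op_convex_nest \<open>0 \<le> a\<close> \<open>0 \<le> b\<close> by blast
qed

lemma ratio_mult:
  fixes a b c d :: real
  assumes "a + b \<noteq> 0" "c + d \<noteq> 0"
  shows "a / (a + b) * (c / (c + d)) = a * c / (a * c + (a * d + b * (c + d)))"
proof -
  have "a * c + (a * d + b * (c + d)) = (a + b) * (c + d)"
    by (simp add: algebra_simps)
  then show ?thesis by simp
qed

lemma powers_approximate: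
  fixes v x :: real
  assumes "0 < v" "v < 1" "0 \<le> x" "x \<le> 1"
  obtains k where "k > 0" "\<bar>v ^ k - x\<bar> \<le> 1 - v"
proof -
  obtain n where "v ^ n < 1 - v"
    using real_arch_pow_inv[of "1 - v" v] assms by auto
  moreover have "v ^ Suc n \<le> v ^ n"
    using assms by (intro power_decreasing) auto
  ultimately have "v ^ Suc n \<le> x + (1 - v)"
    using assms by linarith
  then obtain j where j: "v ^ Suc j \<le> x + (1 - v)"
    and least: "\<forall>i<j. \<not> v ^ Suc i \<le> x + (1 - v)"
    using exists_least_iff[of "\<lambda>i. v ^ Suc i \<le> x + (1 - v)"] by blast
  have "x - (1 - v) \<le> v ^ Suc j"
  proof (cases j)
    case 0
    then show ?thesis using assms by simp
  next
    case (Suc i)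
    then have "\<not> v ^ Suc i \<le> x + (1 - v)" using least by blast
    then have "x + (1 - v) < v ^ Suc i" by linarith
    moreover have "v ^ Suc i * (1 - v) \<le> 1 - v"
      using assms power_le_one[of v "Suc i"] by (intro mult_left_le_one_le) auto
    moreover have "v ^ Suc j = v ^ Suc i - v ^ Suc i * (1 - v)"
      using Suc by (simp add: algebra_simps)
    ultimately show ?thesis using assms by linarith
  qed
  with j show thesis by (intro that[of "Suc j"]) auto
qed

lemma closure_contains_unit_interval:
  fixes S :: "real set"
  assumes S_sub: "S \<subseteq> {0<..<1}" and "s0 \<in> S"
    and compl: "\<And>s. s \<in> S \<Longrightarrow> 1 - s \<in> S"
    and mult: "\<And>s t. s \<in> S \<Longrightarrow> t \<in> S \<Longrightarrow> s * t \<in> S"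
  shows "{0..1} \<subseteq> closure S"
proof -
  have pow: "s ^ Suc n \<in> S" if "s \<in> S" for s n
    by (induction n) (use that mult in auto)
  have s0: "0 < s0" "s0 < 1" using S_sub \<open>s0 \<in> S\<close> by auto
  have "\<exists>y\<in>S. dist y x < e" if x: "0 \<le> x" "x \<le> 1" and "e > 0" for x e
  proof -
    obtain n where "s0 ^ n < e" using real_arch_pow_inv[OF \<open>e > 0\<close> s0(2)] by blast
    moreover define u where "u = s0 ^ Suc n"
    moreover have "u \<le> s0 ^ n"
      unfolding u_def using s0 by (intro power_decreasing) auto
    ultimately have "u < e" by linarith
    have "u \<in> S" using pow \<open>s0 \<in> S\<close> u_def by blast
    then have "1 - u \<in> S" "0 < 1 - u" "1 - u < 1" using compl S_sub by auto
    then obtain k where "k > 0" "\<bar>(1 - u) ^ k - x\<bar> \<le> 1 - (1 - u)"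
      using powers_approximate[of "1 - u" x] x by blast
    moreover have "(1 - u) ^ k \<in> S"
      using pow \<open>1 - u \<in> S\<close> gr0_implies_Suc[OF \<open>k > 0\<close>] by blast
    ultimately show ?thesis using \<open>u < e\<close> by (intro bexI[of _ "(1 - u) ^ k"]) (auto simp: dist_real_def)
  qed
  then show ?thesis by (auto simp: closure_approachable)
qed

definition op_convex_ratios :: "('a \<Rightarrow> 'a \<Rightarrow> 'a) \<Rightarrow> real \<Rightarrow> real \<Rightarrow> real set" where
  "op_convex_ratios circ p q =
     {a / (a + b) | a b. a > 0 \<and> b > 0 \<and> op_convex_transfer circ p q a b}"

lemma op_convex_ratios_subset: "op_convex_ratios circ p q \<subseteq> {0<..<1}"
  unfolding op_convex_ratios_def by (auto simp: divide_less_eq)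

lemma op_convex_ratios_base:
  assumes "p > 0" "q > 0"
  shows "p / (p + q) \<in> op_convex_ratios circ p q"
  unfolding op_convex_ratios_def using assms op_convex_transfer_refl by blast

lemma op_convex_ratios_compl:
  assumes "s \<in> op_convex_ratios circ p q"
  shows "1 - s \<in> op_convex_ratios circ p q"
proof -
  obtain a b where "s = a / (a + b)" "a > 0" "b > 0" "op_convex_transfer circ p q a b"
    using assms unfolding op_convex_ratios_def by blast
  then have "1 - s = b / (b + a)" "op_convex_transfer circ p q b a"
    by (auto simp: field_simps op_convex_transfer_swap)
  with \<open>a > 0\<close> \<open>b > 0\<close> show ?thesis unfolding op_convex_ratios_def by blast
qed

lemma op_convex_ratios_mult:
  assumes "s \<in> op_convex_ratios circ p q" "t \<in> op_convex_ratios circ p q"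
  shows "s * t \<in> op_convex_ratios circ p q"
proof -
  obtain a b where ab: "s = a / (a + b)" "a > 0" "b > 0" "op_convex_transfer circ p q a b"
    using assms(1) unfolding op_convex_ratios_def by blast
  obtain c d where cd: "t = c / (c + d)" "c > 0" "d > 0" "op_convex_transfer circ p q c d"
    using assms(2) unfolding op_convex_ratios_def by blast
  have "s * t = a * c / (a * c + (a * d + b * (c + d)))"
    unfolding ab(1) cd(1) using ab cd by (intro ratio_mult) auto
  moreover have "op_convex_transfer circ p q (a * c) (a * d + b * (c + d))"
    using ab cd by (intro op_convex_transfer_nest) auto
  moreover have "a * c > 0" "a * d + b * (c + d) > 0"
    using ab cd by (auto intro: add_pos_pos mult_pos_pos)
  ultimately show ?thesis unfolding op_convex_ratios_def by blast
qed

theorem lemma3p4: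
  fixes circ :: "'a \<Rightarrow> 'a \<Rightarrow> 'a" and p q :: real and S :: "real set"
  assumes "p > 0" and "q > 0"
  assumes S_def: "S = {a / (a + b) | a b. a > 0 \<and> b > 0 \<and>
      (\<exists>star :: 'a \<Rightarrow> 'a \<Rightarrow> 'a. \<forall>f. op_convex circ p q f \<longrightarrow> op_convex star a b f)}"
  shows "(\<lambda>s. 1 - s) ` S \<subseteq> S \<and> S \<subseteq> {0..1} \<and> (\<forall>s\<in>S. \<forall>t\<in>S. s * t \<in> S)
         \<and> {0..1} \<subseteq> closure S"
proof -
  have S: "S = op_convex_ratios circ p q"
    unfolding S_def op_convex_ratios_def op_convex_transfer_def ..
  have "{0..1} \<subseteq> closure S"
    unfolding S using op_convex_ratios_subset op_convex_ratios_base[OF assms(1,2)]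
      op_convex_ratios_compl op_convex_ratios_mult
    by (rule closure_contains_unit_interval)
  moreover have "S \<subseteq> {0..1}"
    unfolding S using op_convex_ratios_subset by fastforce
  ultimately show ?thesis
    unfolding S using op_convex_ratios_compl op_convex_ratios_mult by blast
qed

end
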